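(* Let $G$ be an $n$-vertex graph and $k$ a positive integer such that for every two disjoint subsets $S,T\subseteq V(G)$ with $|S|=|T|=k$ there is an edge of $G$ between $S$ and $T$. Let $\mathcal{M}$ be a collection of pairwise disjoint pairs $\{x,y\}\subseteq V(G)$ (where $x=y$ is allowed). Then $G\cup\mathcal{M}$ contains an $\mathcal{M}$-alternating path which uses all but at most $2k-1$ of the pairs in $\mathcal{M}$.
   Context: $G\cup\mathcal{M}$ denotes the graph obtained from $G$ by adding the edge $xy$ for every pair $\{x,y\}\in\mathcal{M}$ with $x\ne y$. A path in $G\cup\mathcal{M}$ is $\mathcal{M}$-alternating if it is of the form $e_1f_1e_2f_2\dots e_lf_l$, where the $e_i$ are edges of $G$ and each $f_i$ is either an edge $xy$ with $\{x,y\}\in\mathcal{M}$, $x\ne y$, or a single vertex $x$ with $\{x,x\}\in\mathcal{M}$. A pair is used by the path if it appears as one of the $f_i$. *)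

theory Defs
  imports Main
begin

definition simple_graph :: "'a set \<Rightarrow> ('a \<Rightarrow> 'a \<Rightarrow> bool) \<Rightarrow> bool" where
  "simple_graph V E \<longleftrightarrow> finite V \<and> (\<forall>x y. E x y \<longrightarrow> x \<in> V \<and> y \<in> V)
     \<and> (\<forall>x y. E x y \<longrightarrow> E y x) \<and> (\<forall>x. \<not> E x x)"

definition disjoint_pairs :: "'a set \<Rightarrow> 'a set set \<Rightarrow> bool" where
  "disjoint_pairs V M \<longleftrightarrow> (\<forall>p\<in>M. (\<exists>x y. p = {x, y}) \<and> p \<subseteq> V)
     \<and> (\<forall>p\<in>M. \<forall>q\<in>M. p \<noteq> q \<longrightarrow> p \<inter> q = {})"

text \<open>An M-alternating path e_1 f_1 ... e_l f_l is encoded by its start vertex v0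
  and the oriented list ps of used pairs (a_i, b_i): the walk is
  v0, a_1, (b_1), a_2, (b_2), ..., where b_i is omitted if a_i = b_i
  (f_i is then the single vertex a_i).  Each e_i is the G-edge from the previous
  vertex (v0 or b_{i-1}) to a_i.\<close>
definition path_vertices :: "'a \<Rightarrow> ('a \<times> 'a) list \<Rightarrow> 'a list" where
  "path_vertices v0 ps = v0 # concat (map (\<lambda>(a, b). if a = b then [a] else [a, b]) ps)"

definition alternating_path ::
  "('a \<Rightarrow> 'a \<Rightarrow> bool) \<Rightarrow> 'a set set \<Rightarrow> 'a \<Rightarrow> ('a \<times> 'a) list \<Rightarrow> bool" where
  "alternating_path E M v0 ps \<longleftrightarrow>
     distinct (path_vertices v0 ps)
     \<and> (\<forall>i < length ps. {fst (ps ! i), snd (ps ! i)} \<in> M)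
     \<and> (ps \<noteq> [] \<longrightarrow> E v0 (fst (ps ! 0)))
     \<and> (\<forall>i. Suc i < length ps \<longrightarrow> E (snd (ps ! i)) (fst (ps ! Suc i)))"

definition used_pairs :: "('a \<times> 'a) list \<Rightarrow> 'a set set" where
  "used_pairs ps = (\<lambda>(a, b). {a, b}) ` set ps"

end

(* Depth-first search along M-alternating paths.  Besides the current path, the search keeps
   the set U of unvisited pairs and a set X of abandoned vertices, which has fewer than k
   elements and no edge into the vertices of U.  If the end vertex b of the path has a neighbour
   a in an unvisited pair {a, c}, the path is extended by a, c; otherwise b is abandoned and the
   path retreats by its last pair (or restarts at an unvisited pair if it is a single vertex).
   Throughout, |M| <= |X| + |U| + (pairs used by the path) + 1.  The search stops when b cannot
   be abandoned because X together with b has k vertices; then, by the hypothesis on G, the pairs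
   of U cover fewer than k vertices, so |U| < k and the path misses at most 2k - 1 pairs.  Each
   step decreases 2|U| + (length of the path), so the search does stop. *)

theory Submission
  imports Defs
begin

lemma card_le_card_Union_disjoint:
  assumes "finite (\<Union>C)" "pairwise disjnt C" "{} \<notin> C"
  shows "card C \<le> card (\<Union>C)"
proof -
  have fin: "finite C" "\<And>A. A \<in> C \<Longrightarrow> finite A"
    using assms(1) finite_UnionD by (auto intro: rev_finite_subset)
  have "card C = (\<Sum>A\<in>C. 1)" by simp
  also have "\<dots> \<le> (\<Sum>A\<in>C. card A)"
    using fin assms(3) by (intro sum_mono) (metis One_nat_def Suc_leI card_gt_0_iff)
  also have "\<dots> = card (\<Union>C)"
    using assms(2) fin by (simp add: card_Union_disjoint)
  finally show ?thesis .
qed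

definition end_vertex :: "'a \<Rightarrow> ('a \<times> 'a) list \<Rightarrow> 'a" where
  "end_vertex v0 ps = (if ps = [] then v0 else snd (last ps))"

lemma end_vertex_Nil [simp]: "end_vertex v0 [] = v0"
  by (simp add: end_vertex_def)

lemma end_vertex_snoc [simp]: "end_vertex v0 (ps @ [(a, b)]) = b"
  by (simp add: end_vertex_def)

lemma path_vertices_Nil [simp]: "path_vertices v0 [] = [v0]"
  by (simp add: path_vertices_def)

lemma path_vertices_snoc:
  "path_vertices v0 (ps @ [(a, b)]) = path_vertices v0 ps @ (if a = b then [a] else [a, b])"
  by (simp add: path_vertices_def)

lemma set_path_vertices_snoc [simp]:
  "set (path_vertices v0 (ps @ [(a, b)])) = set (path_vertices v0 ps) \<union> {a, b}"
  by (auto simp: path_vertices_snoc)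

lemma end_vertex_in_path_vertices: "end_vertex v0 ps \<in> set (path_vertices v0 ps)"
  by (cases ps rule: rev_cases) auto

lemma Union_used_pairs_subset: "\<Union>(used_pairs ps) \<subseteq> set (path_vertices v0 ps)"
  by (induction ps rule: rev_induct) (auto simp: used_pairs_def)

lemma used_pairs_snoc: "used_pairs (ps @ [(a, b)]) = insert {a, b} (used_pairs ps)"
  by (simp add: used_pairs_def)

lemma card_used_pairs_snoc_le: "card (used_pairs (ps @ [(a, b)])) \<le> Suc (card (used_pairs ps))"
  by (simp add: used_pairs_snoc card_insert_if used_pairs_def)

lemma card_used_pairs_snoc:
  assumes "a \<notin> set (path_vertices v0 ps)"
  shows "card (used_pairs (ps @ [(a, b)])) = Suc (card (used_pairs ps))"
proof -
  have "{a, b} \<notin> used_pairs ps"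
    using assms Union_used_pairs_subset[of ps v0] by blast
  then show ?thesis
    by (simp add: used_pairs_snoc used_pairs_def)
qed

lemma alternating_path_Nil [simp]: "alternating_path E M v0 []"
  by (simp add: alternating_path_def)

lemma alternating_path_snoc_iff:
  "alternating_path E M v0 (ps @ [(a, b)]) \<longleftrightarrow>
     alternating_path E M v0 ps \<and> {a, b} \<in> M \<and> E (end_vertex v0 ps) a
     \<and> a \<notin> set (path_vertices v0 ps) \<and> b \<notin> set (path_vertices v0 ps)"
proof -
  have edges: "(\<forall>i. Suc i < length (ps @ [(a, b)]) \<longrightarrow>
        E (snd ((ps @ [(a, b)]) ! i)) (fst ((ps @ [(a, b)]) ! Suc i)))
      \<longleftrightarrow> (\<forall>i. Suc i < length ps \<longrightarrow> E (snd (ps ! i)) (fst (ps ! Suc i)))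
          \<and> (ps \<noteq> [] \<longrightarrow> E (snd (last ps)) a)" (is "?L \<longleftrightarrow> ?R")
  proof
    assume L: ?L
    have "E (snd (ps ! i)) (fst (ps ! Suc i))" if "Suc i < length ps" for i
      using L[rule_format, of i] that by (simp add: nth_append)
    moreover have "E (snd (last ps)) a" if "ps \<noteq> []"
      using L[rule_format, of "length ps - 1"] that by (simp add: nth_append last_conv_nth)
    ultimately show ?R by blast
  next
    assume R: ?R
    show ?L
    proof (intro allI impI)
      fix i assume "Suc i < length (ps @ [(a, b)])"
      then consider "Suc i < length ps" | "ps \<noteq> []" "i = length ps - 1"
        by fastforce
      then show "E (snd ((ps @ [(a, b)]) ! i)) (fst ((ps @ [(a, b)]) ! Suc i))"
        by cases (use R in \<open>auto simp: nth_append last_conv_nth\<close>)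
    qed
  qed
  have pairs: "(\<forall>i < length (ps @ [(a, b)]).
        {fst ((ps @ [(a, b)]) ! i), snd ((ps @ [(a, b)]) ! i)} \<in> M)
      \<longleftrightarrow> (\<forall>i < length ps. {fst (ps ! i), snd (ps ! i)} \<in> M) \<and> {a, b} \<in> M"
    by (auto simp: nth_append less_Suc_eq)
  show ?thesis
    unfolding alternating_path_def path_vertices_snoc edges pairs
    by (cases ps) (auto simp: end_vertex_def)
qed

locale alternating_path_search =
  fixes V :: "'a set" and E :: "'a \<Rightarrow> 'a \<Rightarrow> bool" and M :: "'a set set" and k :: nat
  assumes graph: "simple_graph V E"
    and k_pos: "k > 0"
    and edge_between: "\<forall>S T. S \<subseteq> V \<and> T \<subseteq> V \<and> S \<inter> T = {} \<and> card S = k \<and> card T = k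
              \<longrightarrow> (\<exists>x\<in>S. \<exists>y\<in>T. E x y)"
    and pairs: "disjoint_pairs V M"
begin

lemma finite_V: "finite V"
  using graph by (simp add: simple_graph_def)

lemma pair_subset: "p \<in> M \<Longrightarrow> p \<subseteq> V"
  using pairs by (simp add: disjoint_pairs_def)

lemma pair_doubleton: "p \<in> M \<Longrightarrow> x \<in> p \<Longrightarrow> \<exists>y. p = {x, y}"
  using pairs by (auto simp: disjoint_pairs_def)

lemma pair_nonempty: "p \<in> M \<Longrightarrow> p \<noteq> {}"
  using pairs by (auto simp: disjoint_pairs_def)

lemma pairs_disjoint: "p \<in> M \<Longrightarrow> q \<in> M \<Longrightarrow> p \<noteq> q \<Longrightarrow> p \<inter> q = {}"
  using pairs by (simp add: disjoint_pairs_def)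

lemma finite_M: "finite M"
  using finite_V pair_subset by (meson Pow_iff finite_Pow_iff finite_subset subsetI)

lemma card_le_card_Union_pairs:
  assumes "U \<subseteq> M"
  shows "card U \<le> card (\<Union>U)"
proof (rule card_le_card_Union_disjoint)
  have "\<Union>U \<subseteq> V"
    using assms pair_subset by blast
  then show "finite (\<Union>U)"
    using finite_V finite_subset by blast
  show "pairwise disjnt U"
    using assms pairs_disjoint by (auto simp: pairwise_def disjnt_def)
  show "{} \<notin> U"
    using assms pair_nonempty by blast
qed

lemma card_unvisited_less:
  assumes "S \<subseteq> V" "card S = k" "U \<subseteq> M" "S \<inter> \<Union>U = {}" "\<forall>x\<in>S. \<forall>y\<in>\<Union>U. \<not> E x y"
  shows "card U < k"
proof (rule ccontr)
  assume "\<not> card U < k"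
  then have "k \<le> card (\<Union>U)"
    using card_le_card_Union_pairs[OF assms(3)] by simp
  then obtain T where T: "T \<subseteq> \<Union>U" "card T = k"
    by (meson obtain_subset_with_card_n)
  moreover have "T \<subseteq> V"
    using T(1) assms(3) pair_subset by blast
  ultimately show False
    using edge_between[rule_format, of S T] assms by blast
qed

text \<open>The summand 1 counts the pair through the start vertex v0, which the path does not use.\<close>

definition search_state :: "'a set \<Rightarrow> 'a set set \<Rightarrow> 'a \<Rightarrow> ('a \<times> 'a) list \<Rightarrow> bool" where
  "search_state X U v0 ps \<longleftrightarrow>
     X \<subseteq> V \<and> card X < k \<and> U \<subseteq> M \<and> X \<inter> \<Union>U = {} \<and> (\<forall>x\<in>X. \<forall>y\<in>\<Union>U. \<not> E x y)
     \<and> alternating_path E M v0 ps \<and> set (path_vertices v0 ps) \<subseteq> V - X - \<Union>U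
     \<and> card M \<le> card X + card U + card (used_pairs ps) + 1"

lemma search_state_finite:
  assumes "search_state X U v0 ps"
  shows "finite X" "finite U"
  using assms finite_V finite_M finite_subset by (auto simp: search_state_def)

lemma search_state_initial:
  assumes "q \<in> M" "x \<in> q"
  shows "search_state {} (M - {q}) x []"
proof -
  have "x \<notin> \<Union>(M - {q})"
    using assms pairs_disjoint by blast
  then show ?thesis
    using assms k_pos pair_subset card_Suc_Diff1[OF finite_M assms(1), symmetric]
    by (auto simp: search_state_def)
qed

lemma search_state_end_vertex:
  "search_state X U v0 ps \<Longrightarrow> end_vertex v0 ps \<in> V - X - \<Union>U"
  unfolding search_state_def using end_vertex_in_path_vertices[of v0 ps] by (elim conjE) blast

lemma search_state_extend:
  assumes S: "search_state X U v0 ps" and q: "{a, b} \<in> U" and edge: "E (end_vertex v0 ps) a"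
  shows "search_state X (U - {{a, b}}) v0 (ps @ [(a, b)])"
proof -
  let ?U = "U - {{a, b}}"
  have U: "U \<subseteq> M" and XU: "X \<inter> \<Union>U = {}" and alt: "alternating_path E M v0 ps"
    and pv: "set (path_vertices v0 ps) \<subseteq> V - X - \<Union>U"
    using S by (simp_all add: search_state_def)
  have ab: "{a, b} \<in> M" "{a, b} \<subseteq> \<Union>U"
    using q U by auto
  have "alternating_path E M v0 (ps @ [(a, b)])"
    unfolding alternating_path_snoc_iff using alt ab pv edge by blast
  moreover have "card U = Suc (card ?U)"
    using card_Suc_Diff1[OF search_state_finite(2)[OF S] q, symmetric] .
  moreover have "card (used_pairs (ps @ [(a, b)])) = Suc (card (used_pairs ps))"
    using ab(2) pv by (intro card_used_pairs_snoc) blast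
  moreover have "set (path_vertices v0 (ps @ [(a, b)])) \<subseteq> V - X - \<Union>?U"
  proof -
    have "{a, b} \<inter> \<Union>?U = {}"
      using U pairs_disjoint[OF ab(1)] by blast
    then show ?thesis
      using ab XU pv pair_subset by auto
  qed
  ultimately show ?thesis
    using S by (auto simp: search_state_def)
qed

lemma search_state_retreat:
  assumes S: "search_state X U v0 (ps @ [(a, b)])" and "\<forall>y\<in>\<Union>U. \<not> E b y"
    and "card (insert b X) < k"
  shows "search_state (insert b X) U v0 ps"
proof -
  have "b \<in> V - X - \<Union>U" and "b \<notin> set (path_vertices v0 ps)"
    using S search_state_end_vertex[OF S] by (auto simp: search_state_def alternating_path_snoc_iff)
  moreover have "card (insert b X) = Suc (card X)"
    using calculation(1) search_state_finite(1)[OF S] by simp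
  moreover note card_used_pairs_snoc_le[of ps a b]
  ultimately show ?thesis
    using S assms(2,3) by (auto simp: search_state_def alternating_path_snoc_iff)
qed

lemma search_state_restart:
  assumes S: "search_state X U v0 []" and "\<forall>y\<in>\<Union>U. \<not> E v0 y"
    and "card (insert v0 X) < k" and q: "q \<in> U" "x \<in> q"
  shows "search_state (insert v0 X) (U - {q}) x []"
proof -
  have v0: "v0 \<in> V - X - \<Union>U" and U: "U \<subseteq> M" and X: "X \<inter> \<Union>U = {}"
    using S by (auto simp: search_state_def)
  have "card (insert v0 X) = Suc (card X)"
    using v0 search_state_finite(1)[OF S] by simp
  moreover have "card U = Suc (card (U - {q}))"
    using card_Suc_Diff1[OF search_state_finite(2)[OF S] q(1), symmetric] .
  moreover have "x \<in> V - insert v0 X - \<Union>(U - {q})"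
  proof -
    have "x \<notin> \<Union>(U - {q})"
      using U q pairs_disjoint[of q] by blast
    then show ?thesis
      using q U X v0 pair_subset by blast
  qed
  ultimately show ?thesis
    using S assms(2,3) by (auto simp: search_state_def)
qed

lemma search_state_abandon_card:
  assumes S: "search_state X U v0 ps" and "k \<le> card U"
    and stuck: "\<forall>y\<in>\<Union>U. \<not> E (end_vertex v0 ps) y"
  shows "card (insert (end_vertex v0 ps) X) < k"
proof -
  let ?X = "insert (end_vertex v0 ps) X"
  have U: "U \<subseteq> M" and X: "X \<subseteq> V" "X \<inter> \<Union>U = {}" "\<forall>x\<in>X. \<forall>y\<in>\<Union>U. \<not> E x y"
    using S by (simp_all add: search_state_def)
  have b: "end_vertex v0 ps \<in> V - X - \<Union>U"
    using search_state_end_vertex[OF S] .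
  have X': "?X \<subseteq> V" "?X \<inter> \<Union>U = {}" "\<forall>x\<in>?X. \<forall>y\<in>\<Union>U. \<not> E x y"
    using X b stuck by auto
  have "card ?X \<noteq> k"
  proof
    assume "card ?X = k"
    from card_unvisited_less[OF X'(1) this U X'(2,3)] assms(2) show False
      by simp
  qed
  moreover have "card ?X = Suc (card X)"
    using b search_state_finite(1)[OF S] by simp
  ultimately show ?thesis
    using S by (simp add: search_state_def)
qed

lemma search_state_step:
  assumes S: "search_state X U v0 ps" and "k \<le> card U"
  obtains X' U' v0' ps' where "search_state X' U' v0' ps'"
    and "2 * card U' + length ps' < 2 * card U + length ps"
proof -
  let ?b = "end_vertex v0 ps"
  have U: "U \<subseteq> M"
    using S by (simp add: search_state_def)
  note finite_U = search_state_finite(2)[OF S]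
  show ?thesis
  proof (cases "\<exists>y\<in>\<Union>U. E ?b y")
    case True
    then obtain q a where q: "q \<in> U" "a \<in> q" and edge: "E ?b a"
      by blast
    then obtain c where "q = {a, c}"
      using U pair_doubleton by blast
    with q(1) have "search_state X (U - {q}) v0 (ps @ [(a, c)])"
      using search_state_extend[OF S _ edge] by blast
    then show ?thesis
      by (rule that) (simp add: card_Suc_Diff1[OF finite_U q(1), symmetric])
  next
    case stuck: False
    have small: "card (insert ?b X) < k"
      using search_state_abandon_card[OF S assms(2)] stuck by blast
    show ?thesis
    proof (cases ps rule: rev_cases)
      case Nil
      have "U \<noteq> {}"
        using assms(2) k_pos by auto
      then obtain q x where q: "q \<in> U" "x \<in> q"
        using U pair_nonempty by blast
      from S stuck small have "search_state X U v0 []" "\<forall>y\<in>\<Union>U. \<not> E v0 y"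
        "card (insert v0 X) < k"
        by (simp_all add: Nil)
      from search_state_restart[OF this q] show ?thesis
        by (rule that) (simp add: Nil card_Suc_Diff1[OF finite_U q(1), symmetric])
    next
      case (snoc qs p)
      then obtain a c where ps: "ps = qs @ [(a, c)]"
        by (metis prod.exhaust)
      from S stuck small have "search_state X U v0 (qs @ [(a, c)])" "\<forall>y\<in>\<Union>U. \<not> E c y"
        "card (insert c X) < k"
        by (simp_all add: ps)
      from search_state_retreat[OF this] show ?thesis
        by (rule that) (simp add: ps)
    qed
  qed
qed

lemma search_state_finish:
  assumes "search_state X U v0 ps" "card U < k"
  shows "card M \<le> card (used_pairs ps) + (2 * k - 1)"
proof -
  have "card X < k" "card M \<le> card X + card U + card (used_pairs ps) + 1"
    using assms(1) by (simp_all add: search_state_def)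
  with assms(2) show ?thesis
    by linarith
qed

lemma search_state_succeeds:
  assumes "search_state X U v0 ps"
  shows "\<exists>v0 ps. alternating_path E M v0 ps \<and> card M \<le> card (used_pairs ps) + (2 * k - 1)"
  using assms
proof (induction "2 * card U + length ps" arbitrary: X U v0 ps rule: less_induct)
  case less
  show ?case
  proof (cases "card U < k")
    case True
    then show ?thesis
      using search_state_finish[OF less.prems] less.prems by (auto simp: search_state_def)
  next
    case False
    then show ?thesis
      using search_state_step[OF less.prems] less.hyps by (metis not_le)
  qed
qed

end

theorem lemma3p17:
  fixes V :: "'a set" and E :: "'a \<Rightarrow> 'a \<Rightarrow> bool" and M :: "'a set set" and k :: nat
  assumes "simple_graph V E"
    and "k > 0"
    and "\<forall>S T. S \<subseteq> V \<and> T \<subseteq> V \<and> S \<inter> T = {} \<and> card S = k \<and> card T = k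
              \<longrightarrow> (\<exists>x\<in>S. \<exists>y\<in>T. E x y)"
    and "disjoint_pairs V M"
  shows "\<exists>v0 ps. alternating_path E M v0 ps \<and> card M \<le> card (used_pairs ps) + (2 * k - 1)"
proof -
  interpret alternating_path_search V E M k
    using assms by unfold_locales
  show ?thesis
  proof (cases "M = {}")
    case True
    then show ?thesis
      using alternating_path_Nil by fastforce
  next
    case False
    then obtain q x where "q \<in> M" "x \<in> q"
      using pair_nonempty by blast
    then show ?thesis
      using search_state_succeeds search_state_initial by blast
  qed
qed

end
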